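(* Let $G=(V,E)$ be a finite graph, $A\subset V$, $\xi_1,\xi_2\in\{-1,1\}^A$ boundary conditions, $h\in\mathbb R^V$ an arbitrary external field and $T>0$. Then for any two increasing events $\mathtt A,\mathtt B\subset\Theta^{\bar G}$, $$\bar\mu^{\xi_1/\xi_2}_{G,h}(\mathtt A\cap\mathtt B)\ge\bar\mu^{\xi_1/\xi_2}_{G,h}(\mathtt A)\,\bar\mu^{\xi_1/\xi_2}_{G,h}(\mathtt B).$$
   Context: Extended Ising model: for a finite graph $G=(V,E)$ let $\bar G=V\cup E$. An extended configuration $\bar\sigma$ assigns $\bar\sigma_v\in\{-1,1\}$ to each $v\in V$ and $\bar\sigma_e\in\{-1,0,1\}$ to each $e\in E$, subject to $|\bar\sigma_v-\bar\sigma_e|\le1$ whenever $v$ is an endpoint of $e$. For $T>0$ and $h\in\mathbb R^V$, $\bar\mu_{G,h}(\bar\sigma)\propto\prod_{e\in E}\prod_{v\in e}W(\bar\sigma_v,\bar\sigma_e)\cdot\exp\big(\frac1T\sum_{v\in V}h_v\bar\sigma_v\big)$, where $W(a,b)=1$ if $b=a$, $W(a,b)=t$ if $b=0$, $W(a,b)=0$ if $b=-a$, and $t=(e^{2/T}-1)^{-1/2}$. For $A\subset V$ and $\xi\in\{-1,1\}^A$, $\bar\mu^{\xi}_{G,h}$ denotes $\bar\mu_{G,h}$ conditioned on $\bar\sigma_v=\xi_v$ for $v\in A$. The product measure $\bar\mu^{\xi_1/\xi_2}_{G,h}=\bar\mu^{\xi_1}_{G,h}\otimes\bar\mu^{\xi_2}_{G,h}$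 is a law on pairs $(\bar\sigma^1,\bar\sigma^2)$, viewed as elements of $\Theta^{\bar G}$ with $\Theta=\{-1,0,1\}^2$ (the value at $u\in\bar G$ is $(\bar\sigma^1_u,\bar\sigma^2_u)$). Partial order on $\Theta$: $(a,b)\succeq(c,d)$ iff $a\ge c$ and $b\le d$; extended coordinatewise to $\Theta^{\bar G}$. An event $\mathtt A\subset\Theta^{\bar G}$ is increasing if $x\in\mathtt A$ and $y\succeq x$ imply $y\in\mathtt A$. *)

theory Defs
  imports Complex_Main
begin

text \<open>Sites of the extended graph: vertices (Inl v) and edges (Inr e).
  A finite simple graph is a finite vertex set V with an edge set E of
  2-element subsets of V.\<close>

type_synonym 'v site = "'v + 'v set"

definition gbar :: "'v set \<Rightarrow> 'v set set \<Rightarrow> 'v site set" where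
  "gbar V E = Inl ` V \<union> Inr ` E"

definition ext_configs :: "'v set \<Rightarrow> 'v set set \<Rightarrow> ('v site \<Rightarrow> int) set" where
  "ext_configs V E = {\<sigma>.
     (\<forall>v\<in>V. \<sigma> (Inl v) \<in> {-1, 1}) \<and>
     (\<forall>e\<in>E. \<sigma> (Inr e) \<in> {-1, 0, 1}) \<and>
     (\<forall>e\<in>E. \<forall>v\<in>e. \<bar>\<sigma> (Inl v) - \<sigma> (Inr e)\<bar> \<le> 1) \<and>
     (\<forall>u. u \<notin> gbar V E \<longrightarrow> \<sigma> u = 0)}"

definition ising_t :: "real \<Rightarrow> real" where
  "ising_t T = 1 / sqrt (exp (2 / T) - 1)"

definition Wt :: "real \<Rightarrow> int \<Rightarrow> int \<Rightarrow> real" where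
  "Wt t a b = (if b = a then 1 else if b = 0 then t else 0)"

definition ext_weight :: "'v set \<Rightarrow> 'v set set \<Rightarrow> real \<Rightarrow> ('v \<Rightarrow> real) \<Rightarrow> ('v site \<Rightarrow> int) \<Rightarrow> real" where
  "ext_weight V E T h \<sigma> =
     (\<Prod>e\<in>E. \<Prod>v\<in>e. Wt (ising_t T) (\<sigma> (Inl v)) (\<sigma> (Inr e))) *
     exp ((1 / T) * (\<Sum>v\<in>V. h v * of_int (\<sigma> (Inl v))))"

definition bc_configs :: "'v set \<Rightarrow> 'v set set \<Rightarrow> 'v set \<Rightarrow> ('v \<Rightarrow> int) \<Rightarrow> ('v site \<Rightarrow> int) set" where
  "bc_configs V E A \<xi> = {\<sigma> \<in> ext_configs V E. \<forall>v\<in>A. \<sigma> (Inl v) = \<xi> v}"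

definition ext_mu :: "'v set \<Rightarrow> 'v set set \<Rightarrow> real \<Rightarrow> ('v \<Rightarrow> real) \<Rightarrow> 'v set \<Rightarrow> ('v \<Rightarrow> int)
    \<Rightarrow> ('v site \<Rightarrow> int) \<Rightarrow> real" where
  "ext_mu V E T h A \<xi> \<sigma> =
     (if \<sigma> \<in> bc_configs V E A \<xi>
      then ext_weight V E T h \<sigma> / (\<Sum>\<tau>\<in>bc_configs V E A \<xi>. ext_weight V E T h \<tau>)
      else 0)"

definition Theta_G :: "'v set \<Rightarrow> 'v set set \<Rightarrow> ('v site \<Rightarrow> int \<times> int) set" where
  "Theta_G V E = {x.
     (\<forall>u\<in>gbar V E. fst (x u) \<in> {-1, 0, 1} \<and> snd (x u) \<in> {-1, 0, 1}) \<and>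
     (\<forall>u. u \<notin> gbar V E \<longrightarrow> x u = (0, 0))}"

definition theta_ge :: "int \<times> int \<Rightarrow> int \<times> int \<Rightarrow> bool" where
  "theta_ge p q \<longleftrightarrow> fst p \<ge> fst q \<and> snd p \<le> snd q"

definition increasing_event :: "'v set \<Rightarrow> 'v set set \<Rightarrow> ('v site \<Rightarrow> int \<times> int) set \<Rightarrow> bool" where
  "increasing_event V E Ev \<longleftrightarrow> Ev \<subseteq> Theta_G V E \<and>
     (\<forall>x\<in>Ev. \<forall>y\<in>Theta_G V E. (\<forall>u\<in>gbar V E. theta_ge (y u) (x u)) \<longrightarrow> y \<in> Ev)"

definition pair_config :: "('v site \<Rightarrow> int) \<Rightarrow> ('v site \<Rightarrow> int) \<Rightarrow> ('v site \<Rightarrow> int \<times> int)" where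
  "pair_config \<sigma>1 \<sigma>2 = (\<lambda>u. (\<sigma>1 u, \<sigma>2 u))"

definition prod_prob :: "'v set \<Rightarrow> 'v set set \<Rightarrow> real \<Rightarrow> ('v \<Rightarrow> real) \<Rightarrow> 'v set
    \<Rightarrow> ('v \<Rightarrow> int) \<Rightarrow> ('v \<Rightarrow> int) \<Rightarrow> ('v site \<Rightarrow> int \<times> int) set \<Rightarrow> real" where
  "prod_prob V E T h A \<xi>1 \<xi>2 Ev =
     (\<Sum>(\<sigma>1, \<sigma>2) \<in> bc_configs V E A \<xi>1 \<times> bc_configs V E A \<xi>2.
        if pair_config \<sigma>1 \<sigma>2 \<in> Ev
        then ext_mu V E T h A \<xi>1 \<sigma>1 * ext_mu V E T h A \<xi>2 \<sigma>2 else 0)"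

end

(*
  Flipping the spins of the second copy, (s1, s2) |-> (s1, -s2), turns the order on Theta into
  the coordinatewise order, increasing events into up-sets, and the product measure mu^{xi1/xi2}_{G,h}
  into the product of mu^{xi1}_{G,h} and mu^{-xi2}_{G,-h}.  Every extended Ising measure satisfies
  the FKG lattice condition with equality, mu(s sup s') mu(s inf s') = mu(s) mu(s'), because
  W(max a a', max b b') W(min a a', min b b') = W(a, b) W(a', b') on admissible pairs and the field
  term is linear, and its support is a sublattice of {-1,0,1}^Gbar.  The Harris-FKG inequality
  therefore follows from the Ahlswede-Daykin four functions theorem, which holds on finite
  sublattices of products of chains by induction from the two-point inequality.
*)
theory Submission
  imports Defs "HOL-Library.Product_Order" "HOL-Library.Function_Algebras"
begin

lemma four_functions_two_point:
  fixes a0 a1 b0 b1 c0 c1 d0 d1 :: real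
  assumes nonneg: "0 \<le> a0" "0 \<le> a1" "0 \<le> b0" "0 \<le> b1" "0 \<le> c0" "0 \<le> c1" "0 \<le> d0" "0 \<le> d1"
    and "a0 * b0 \<le> c0 * d0" "a1 * b1 \<le> c1 * d1" "a0 * b1 \<le> c1 * d0" "a1 * b0 \<le> c1 * d0"
  shows "(a0 + a1) * (b0 + b1) \<le> (c0 + c1) * (d0 + d1)"
proof -
  have cross: "a0 * b1 + a1 * b0 \<le> c1 * d0 + c0 * d1"
  proof (cases "c1 * d0 = 0")
    case True
    then have "a0 * b1 = 0" "a1 * b0 = 0"
      using assms by (metis antisym mult_nonneg_nonneg)+
    moreover have "0 \<le> c1 * d0 + c0 * d1" using nonneg by simp
    ultimately show ?thesis by linarith
  next
    case False
    define p where "p = c1 * d0"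
    have "p > 0" using False nonneg by (simp add: p_def less_le)
    \<comment> \<open>both cross terms are at most p, so their sum exceeds p by at most their product over p\<close>
    have "0 \<le> (p - a0 * b1) * (p - a1 * b0)"
      using assms by (intro mult_nonneg_nonneg) (auto simp: p_def)
    then have "p * (a0 * b1 + a1 * b0) \<le> p * p + (a0 * b0) * (a1 * b1)"
      by (simp add: algebra_simps)
    also have "(a0 * b0) * (a1 * b1) \<le> (c0 * d0) * (c1 * d1)"
      by (rule mult_mono) (use assms in auto)
    also have "(c0 * d0) * (c1 * d1) = p * (c0 * d1)"
      by (simp add: p_def algebra_simps)
    finally have "p * (a0 * b1 + a1 * b0) \<le> p * (p + c0 * d1)"
      by (simp add: algebra_simps)
    with \<open>p > 0\<close> have "a0 * b1 + a1 * b0 \<le> p + c0 * d1" by simp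
    then show ?thesis by (simp add: p_def)
  qed
  show ?thesis using assms cross by (simp add: algebra_simps)
qed

definition four_functions :: "'a::lattice set \<Rightarrow> bool" where
  "four_functions X \<longleftrightarrow> (\<forall>\<alpha> \<beta> \<gamma> \<delta> :: 'a \<Rightarrow> real.
     (\<forall>x. 0 \<le> \<alpha> x \<and> 0 \<le> \<beta> x \<and> 0 \<le> \<gamma> x \<and> 0 \<le> \<delta> x) \<longrightarrow>
     (\<forall>x\<in>X. \<forall>y\<in>X. \<alpha> x * \<beta> y \<le> \<gamma> (sup x y) * \<delta> (inf x y)) \<longrightarrow>
     sum \<alpha> X * sum \<beta> X \<le> sum \<gamma> X * sum \<delta> X)"

lemma four_functionsI:
  assumes "\<And>\<alpha> \<beta> \<gamma> \<delta> :: 'a \<Rightarrow> real.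
      (\<And>x. 0 \<le> \<alpha> x) \<Longrightarrow> (\<And>x. 0 \<le> \<beta> x) \<Longrightarrow> (\<And>x. 0 \<le> \<gamma> x) \<Longrightarrow> (\<And>x. 0 \<le> \<delta> x) \<Longrightarrow>
      (\<And>x y. x \<in> X \<Longrightarrow> y \<in> X \<Longrightarrow> \<alpha> x * \<beta> y \<le> \<gamma> (sup x y) * \<delta> (inf x y)) \<Longrightarrow>
      sum \<alpha> X * sum \<beta> X \<le> sum \<gamma> X * sum \<delta> X"
  shows "four_functions (X :: 'a::lattice set)"
  using assms unfolding four_functions_def by blast

lemma four_functionsD:
  fixes \<alpha> \<beta> \<gamma> \<delta> :: "'a::lattice \<Rightarrow> real"
  assumes "four_functions X"
    and "\<And>x. 0 \<le> \<alpha> x" "\<And>x. 0 \<le> \<beta> x" "\<And>x. 0 \<le> \<gamma> x" "\<And>x. 0 \<le> \<delta> x"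
    and "\<And>x y. x \<in> X \<Longrightarrow> y \<in> X \<Longrightarrow> \<alpha> x * \<beta> y \<le> \<gamma> (sup x y) * \<delta> (inf x y)"
  shows "sum \<alpha> X * sum \<beta> X \<le> sum \<gamma> X * sum \<delta> X"
  using assms unfolding four_functions_def by blast

lemma four_functions_empty: "four_functions {}"
  by (rule four_functionsI) simp

lemma four_functions_singleton: "four_functions {a}"
  by (rule four_functionsI) simp

lemma four_functions_bool: "four_functions (UNIV :: bool set)"
proof (rule four_functionsI)
  fix \<alpha> \<beta> \<gamma> \<delta> :: "bool \<Rightarrow> real"
  assume "\<And>x. 0 \<le> \<alpha> x" "\<And>x. 0 \<le> \<beta> x" "\<And>x. 0 \<le> \<gamma> x" "\<And>x. 0 \<le> \<delta> x"
    and lattice: "\<And>x y. x \<in> UNIV \<Longrightarrow> y \<in> UNIV \<Longrightarrow> \<alpha> x * \<beta> y \<le> \<gamma> (sup x y) * \<delta> (inf x y)"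
  have "(\<alpha> False + \<alpha> True) * (\<beta> False + \<beta> True) \<le> (\<gamma> False + \<gamma> True) * (\<delta> False + \<delta> True)"
    by (rule four_functions_two_point)
      (use lattice[of False False] lattice[of True True] lattice[of False True] lattice[of True False]
         \<open>\<And>x. 0 \<le> \<alpha> x\<close> \<open>\<And>x. 0 \<le> \<beta> x\<close> \<open>\<And>x. 0 \<le> \<gamma> x\<close> \<open>\<And>x. 0 \<le> \<delta> x\<close> in auto)
  then show "sum \<alpha> UNIV * sum \<beta> UNIV \<le> sum \<gamma> UNIV * sum \<delta> UNIV"
    by (simp add: UNIV_bool)
qed

lemma four_functions_Times:
  fixes X :: "'a::lattice set" and Y :: "'b::lattice set"
  assumes X: "four_functions X" and Y: "four_functions Y"
  shows "four_functions (X \<times> Y)"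
proof (rule four_functionsI)
  fix \<alpha> \<beta> \<gamma> \<delta> :: "'a \<times> 'b \<Rightarrow> real"
  assume nonneg: "\<And>x. 0 \<le> \<alpha> x" "\<And>x. 0 \<le> \<beta> x" "\<And>x. 0 \<le> \<gamma> x" "\<And>x. 0 \<le> \<delta> x"
    and lattice: "\<And>p q. p \<in> X \<times> Y \<Longrightarrow> q \<in> X \<times> Y \<Longrightarrow> \<alpha> p * \<beta> q \<le> \<gamma> (sup p q) * \<delta> (inf p q)"
  define marginal where "marginal g x = (\<Sum>y\<in>Y. g (x, y))" for g :: "'a \<times> 'b \<Rightarrow> real" and x
  have "sum (marginal \<alpha>) X * sum (marginal \<beta>) X \<le> sum (marginal \<gamma>) X * sum (marginal \<delta>) X"
  proof (rule four_functionsD[OF X])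
    show "\<And>x. 0 \<le> marginal \<alpha> x" "\<And>x. 0 \<le> marginal \<beta> x"
      "\<And>x. 0 \<le> marginal \<gamma> x" "\<And>x. 0 \<le> marginal \<delta> x"
      using nonneg by (simp_all add: marginal_def sum_nonneg)
    fix x x' assume "x \<in> X" "x' \<in> X"
    then show "marginal \<alpha> x * marginal \<beta> x' \<le> marginal \<gamma> (sup x x') * marginal \<delta> (inf x x')"
      unfolding marginal_def
      by (intro four_functionsD[OF Y]) (use nonneg lattice[of "(x, _)" "(x', _)"] in auto)
  qed
  then show "sum \<alpha> (X \<times> Y) * sum \<beta> (X \<times> Y) \<le> sum \<gamma> (X \<times> Y) * sum \<delta> (X \<times> Y)"
    by (simp add: marginal_def sum.cartesian_product)
qed

lemma four_functions_image:
  assumes X: "four_functions X" and "inj_on f X"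
    and hom: "\<And>x y. x \<in> X \<Longrightarrow> y \<in> X \<Longrightarrow> f (sup x y) = sup (f x) (f y) \<and> f (inf x y) = inf (f x) (f y)"
  shows "four_functions (f ` X)"
proof (rule four_functionsI)
  fix \<alpha> \<beta> \<gamma> \<delta> :: "'b \<Rightarrow> real"
  assume "\<And>x. 0 \<le> \<alpha> x" "\<And>x. 0 \<le> \<beta> x" "\<And>x. 0 \<le> \<gamma> x" "\<And>x. 0 \<le> \<delta> x"
    and lattice: "\<And>x y. x \<in> f ` X \<Longrightarrow> y \<in> f ` X \<Longrightarrow> \<alpha> x * \<beta> y \<le> \<gamma> (sup x y) * \<delta> (inf x y)"
  then have "sum (\<alpha> \<circ> f) X * sum (\<beta> \<circ> f) X \<le> sum (\<gamma> \<circ> f) X * sum (\<delta> \<circ> f) X"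
    by (intro four_functionsD[OF X]) (auto simp: hom)
  then show "sum \<alpha> (f ` X) * sum \<beta> (f ` X) \<le> sum \<gamma> (f ` X) * sum \<delta> (f ` X)"
    by (simp add: sum.reindex[OF \<open>inj_on f X\<close>])
qed

lemma four_functions_sublattice:
  assumes X: "four_functions X" and "finite X" and "Y \<subseteq> X"
    and closed: "\<And>x y. x \<in> Y \<Longrightarrow> y \<in> Y \<Longrightarrow> sup x y \<in> Y \<and> inf x y \<in> Y"
  shows "four_functions Y"
proof (rule four_functionsI)
  fix \<alpha> \<beta> \<gamma> \<delta> :: "'a \<Rightarrow> real"
  assume nonneg: "\<And>x. 0 \<le> \<alpha> x" "\<And>x. 0 \<le> \<beta> x" "\<And>x. 0 \<le> \<gamma> x" "\<And>x. 0 \<le> \<delta> x"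
    and lattice: "\<And>x y. x \<in> Y \<Longrightarrow> y \<in> Y \<Longrightarrow> \<alpha> x * \<beta> y \<le> \<gamma> (sup x y) * \<delta> (inf x y)"
  define restrict where "restrict g x = (if x \<in> Y then g x else 0)" for g :: "'a \<Rightarrow> real" and x
  have "sum (restrict \<alpha>) X * sum (restrict \<beta>) X \<le> sum (restrict \<gamma>) X * sum (restrict \<delta>) X"
    by (rule four_functionsD[OF X]) (use nonneg lattice closed in \<open>auto simp: restrict_def\<close>)
  moreover have "sum (restrict g) X = sum g Y" for g
    using sum.inter_restrict[OF \<open>finite X\<close>, of g Y] \<open>Y \<subseteq> X\<close>
    by (simp add: restrict_def Int_absorb1)
  ultimately show "sum \<alpha> Y * sum \<beta> Y \<le> sum \<gamma> Y * sum \<delta> Y"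
    by simp
qed

lemma four_functions_chain:
  fixes X :: "'a::{linorder, lattice} set"
  assumes "finite X"
  shows "four_functions X"
  using assms
proof (induction X rule: finite_linorder_max_induct)
  case empty
  show ?case by (rule four_functions_empty)
next
  case (insert b A)
  show ?case
  proof (cases "A = {}")
    case True
    then show ?thesis by (simp add: four_functions_singleton)
  next
    case False
    define m where "m = Max A"
    have "m \<in> A" and below_m: "\<And>z. z \<in> A \<Longrightarrow> z \<le> m"
      using insert.hyps False by (simp_all add: m_def)
    \<comment> \<open>the new top element b is embedded as (m, True) into the product A \<times> bool\<close>
    define S where "S = A \<times> {False} \<union> {(m, True)}"
    define collapse where "collapse p = (if snd p then b else fst p)" for p :: "'a \<times> bool"
    have "four_functions S"
    proof (rule four_functions_sublattice)
      show "four_functions (A \<times> (UNIV :: bool set))"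
        using insert.IH four_functions_bool by (rule four_functions_Times)
      show "finite (A \<times> (UNIV :: bool set))" using insert.hyps by simp
      show "S \<subseteq> A \<times> UNIV" using \<open>m \<in> A\<close> by (auto simp: S_def)
      show "sup p q \<in> S \<and> inf p q \<in> S" if "p \<in> S" "q \<in> S" for p q
        using that below_m \<open>m \<in> A\<close>
        by (auto simp: S_def sup_max inf_min max_def min_def split: if_splits intro: antisym)
    qed
    moreover have "inj_on collapse S"
      using insert.hyps by (auto simp: S_def collapse_def inj_on_def)
    moreover have "collapse (sup p q) = sup (collapse p) (collapse q) \<and>
        collapse (inf p q) = inf (collapse p) (collapse q)" if "p \<in> S" "q \<in> S" for p q
      using that insert.hyps below_m \<open>m \<in> A\<close>
      by (auto simp: S_def collapse_def sup_max inf_min max_def min_def intro: antisym)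
    ultimately have "four_functions (collapse ` S)"
      by (rule four_functions_image)
    moreover have "collapse ` S = insert b A"
      by (force simp: S_def collapse_def image_iff)
    ultimately show ?thesis by simp
  qed
qed

definition fun_box :: "'i set \<Rightarrow> 'a set \<Rightarrow> 'a \<Rightarrow> ('i \<Rightarrow> 'a) set" where
  "fun_box I L d = {f. \<forall>i. (i \<in> I \<longrightarrow> f i \<in> L) \<and> (i \<notin> I \<longrightarrow> f i = d)}"

lemma finite_fun_box: "finite I \<Longrightarrow> finite L \<Longrightarrow> finite (fun_box I L d)"
  unfolding fun_box_def by (rule finite_set_of_finite_funs)

lemma fun_box_empty: "fun_box {} L d = {\<lambda>_. d}"
  by (auto simp: fun_box_def)

lemma fun_box_insert:
  assumes "i \<notin> I"
  shows "fun_box (insert i I) L d = (\<lambda>(g, a). g(i := a)) ` (fun_box I L d \<times> L)"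
proof
  show "fun_box (insert i I) L d \<subseteq> (\<lambda>(g, a). g(i := a)) ` (fun_box I L d \<times> L)"
  proof
    fix f assume f: "f \<in> fun_box (insert i I) L d"
    then have "(f(i := d), f i) \<in> fun_box I L d \<times> L"
      using assms by (auto simp: fun_box_def)
    then show "f \<in> (\<lambda>(g, a). g(i := a)) ` (fun_box I L d \<times> L)"
      by (rule rev_image_eqI) simp
  qed
  show "(\<lambda>(g, a). g(i := a)) ` (fun_box I L d \<times> L) \<subseteq> fun_box (insert i I) L d"
    by (auto simp: fun_box_def)
qed

lemma four_functions_fun_box:
  assumes "finite I" and L: "four_functions L"
  shows "four_functions (fun_box I L d)"
  using \<open>finite I\<close>
proof (induction I rule: finite_induct)
  case empty
  show ?case by (simp add: fun_box_empty four_functions_singleton)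
next
  case (insert i I)
  let ?update = "\<lambda>(g, a). g(i := a)"
  have "four_functions (?update ` (fun_box I L d \<times> L))"
  proof (rule four_functions_image)
    show "four_functions (fun_box I L d \<times> L)"
      using insert.IH L by (rule four_functions_Times)
    have "g i = d" if "g \<in> fun_box I L d" for g
      using that insert.hyps by (simp add: fun_box_def)
    then show "inj_on ?update (fun_box I L d \<times> L)"
      by (auto simp: inj_on_def fun_eq_iff)
    show "?update (sup p q) = sup (?update p) (?update q) \<and>
        ?update (inf p q) = inf (?update p) (?update q)" for p q :: "('a \<Rightarrow> 'b) \<times> 'b"
      by (cases p, cases q) (simp add: fun_eq_iff)
  qed
  then show ?case by (simp add: fun_box_insert insert.hyps)
qed

definition log_supermodular_on :: "'a::lattice set \<Rightarrow> ('a \<Rightarrow> real) \<Rightarrow> bool" where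
  "log_supermodular_on X \<mu> \<longleftrightarrow> (\<forall>x\<in>X. \<forall>y\<in>X. \<mu> x * \<mu> y \<le> \<mu> (sup x y) * \<mu> (inf x y))"

lemma log_supermodular_on_Times:
  fixes \<mu>1 :: "'a::lattice \<Rightarrow> real" and \<mu>2 :: "'b::lattice \<Rightarrow> real"
  assumes "log_supermodular_on X \<mu>1" and "log_supermodular_on Y \<mu>2"
    and "\<And>x. 0 \<le> \<mu>1 x" and "\<And>y. 0 \<le> \<mu>2 y"
  shows "log_supermodular_on (X \<times> Y) (\<lambda>(x, y). \<mu>1 x * \<mu>2 y)"
  unfolding log_supermodular_on_def
proof (clarsimp)
  fix x y x' y' assume mem: "x \<in> X" "y \<in> Y" "x' \<in> X" "y' \<in> Y"
  have "(\<mu>1 x * \<mu>1 x') * (\<mu>2 y * \<mu>2 y')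
      \<le> (\<mu>1 (sup x x') * \<mu>1 (inf x x')) * (\<mu>2 (sup y y') * \<mu>2 (inf y y'))"
    by (rule mult_mono) (use assms mem in \<open>auto simp: log_supermodular_on_def\<close>)
  then show "\<mu>1 x * \<mu>2 y * (\<mu>1 x' * \<mu>2 y')
      \<le> \<mu>1 (sup x x') * \<mu>2 (sup y y') * (\<mu>1 (inf x x') * \<mu>2 (inf y y'))"
    by (simp add: ac_simps)
qed

theorem FKG_inequality:
  fixes \<mu> :: "'a::lattice \<Rightarrow> real"
  assumes X: "four_functions X" and "finite X"
    and sup_closed: "\<And>x y. x \<in> X \<Longrightarrow> y \<in> X \<Longrightarrow> sup x y \<in> X"
    and nonneg: "\<And>x. 0 \<le> \<mu> x" and "log_supermodular_on X \<mu>"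
    and U: "\<And>x y. x \<in> X \<Longrightarrow> y \<in> X \<Longrightarrow> x \<le> y \<Longrightarrow> x \<in> U \<Longrightarrow> y \<in> U"
    and W: "\<And>x y. x \<in> X \<Longrightarrow> y \<in> X \<Longrightarrow> x \<le> y \<Longrightarrow> x \<in> W \<Longrightarrow> y \<in> W"
  shows "sum \<mu> (X \<inter> U) * sum \<mu> (X \<inter> W) \<le> sum \<mu> (X \<inter> (U \<inter> W)) * sum \<mu> X"
proof -
  define restrict where "restrict S x = (if x \<in> S then \<mu> x else 0)" for S x
  have "sum (restrict U) X * sum (restrict W) X \<le> sum (restrict (U \<inter> W)) X * sum \<mu> X"
  proof (rule four_functionsD[OF X])
    fix x y assume "x \<in> X" "y \<in> X"
    then have "x \<in> U \<Longrightarrow> sup x y \<in> U" "y \<in> W \<Longrightarrow> sup x y \<in> W"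
      using U W sup_closed by (meson sup_ge1 sup_ge2)+
    moreover have "\<mu> x * \<mu> y \<le> \<mu> (sup x y) * \<mu> (inf x y)"
      using \<open>log_supermodular_on X \<mu>\<close> \<open>x \<in> X\<close> \<open>y \<in> X\<close> by (simp add: log_supermodular_on_def)
    ultimately show "restrict U x * restrict W y \<le> restrict (U \<inter> W) (sup x y) * \<mu> (inf x y)"
      using nonneg by (auto simp: restrict_def)
  qed (use nonneg in \<open>simp_all add: restrict_def\<close>)
  then show ?thesis
    by (simp add: restrict_def sum.inter_restrict[OF \<open>finite X\<close>])
qed

lemma finite_gbar:
  assumes "finite V" and "\<forall>e\<in>E. e \<subseteq> V"
  shows "finite (gbar V E)"
proof -
  have "E \<subseteq> Pow V" using assms(2) by blast
  then have "finite E" using assms(1) by (simp add: finite_subset)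
  then show ?thesis using assms(1) by (simp add: gbar_def)
qed

lemma abs_max_diff_le:
  fixes a b a' b' c :: "'a::linordered_idom"
  assumes "\<bar>a - b\<bar> \<le> c" and "\<bar>a' - b'\<bar> \<le> c"
  shows "\<bar>max a a' - max b b'\<bar> \<le> c"
  using assms by (auto simp: max_def abs_le_iff)

lemma abs_min_diff_le:
  fixes a b a' b' c :: "'a::linordered_idom"
  assumes "\<bar>a - b\<bar> \<le> c" and "\<bar>a' - b'\<bar> \<le> c"
  shows "\<bar>min a a' - min b b'\<bar> \<le> c"
  using assms by (auto simp: min_def abs_le_iff)

lemma sup_ext_configs:
  assumes "\<sigma> \<in> ext_configs V E" and "\<sigma>' \<in> ext_configs V E"
  shows "sup \<sigma> \<sigma>' \<in> ext_configs V E"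
  unfolding ext_configs_def sup_fun_def sup_max
proof (intro CollectI conjI ballI allI impI)
  fix e v assume "e \<in> E" "v \<in> e"
  with assms show "\<bar>max (\<sigma> (Inl v)) (\<sigma>' (Inl v)) - max (\<sigma> (Inr e)) (\<sigma>' (Inr e))\<bar> \<le> 1"
    by (intro abs_max_diff_le) (auto simp: ext_configs_def)
qed (use assms in \<open>auto simp: ext_configs_def max_def\<close>)

lemma inf_ext_configs:
  assumes "\<sigma> \<in> ext_configs V E" and "\<sigma>' \<in> ext_configs V E"
  shows "inf \<sigma> \<sigma>' \<in> ext_configs V E"
  unfolding ext_configs_def inf_fun_def inf_min
proof (intro CollectI conjI ballI allI impI)
  fix e v assume "e \<in> E" "v \<in> e"
  with assms show "\<bar>min (\<sigma> (Inl v)) (\<sigma>' (Inl v)) - min (\<sigma> (Inr e)) (\<sigma>' (Inr e))\<bar> \<le> 1"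
    by (intro abs_min_diff_le) (auto simp: ext_configs_def)
qed (use assms in \<open>auto simp: ext_configs_def min_def\<close>)

lemma uminus_ext_configs: "\<sigma> \<in> ext_configs V E \<Longrightarrow> - \<sigma> \<in> ext_configs V E"
  unfolding ext_configs_def by (auto simp: abs_minus_commute)

lemma sup_bc_configs:
  "\<sigma> \<in> bc_configs V E A \<xi> \<Longrightarrow> \<sigma>' \<in> bc_configs V E A \<xi> \<Longrightarrow> sup \<sigma> \<sigma>' \<in> bc_configs V E A \<xi>"
  by (simp add: bc_configs_def sup_ext_configs)

lemma inf_bc_configs:
  "\<sigma> \<in> bc_configs V E A \<xi> \<Longrightarrow> \<sigma>' \<in> bc_configs V E A \<xi> \<Longrightarrow> inf \<sigma> \<sigma>' \<in> bc_configs V E A \<xi>"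
  by (simp add: bc_configs_def inf_ext_configs)

lemma uminus_bc_configs: "uminus ` bc_configs V E A \<xi> = bc_configs V E A (- \<xi>)"
proof
  show "uminus ` bc_configs V E A \<xi> \<subseteq> bc_configs V E A (- \<xi>)"
    by (auto simp: bc_configs_def uminus_ext_configs)
  show "bc_configs V E A (- \<xi>) \<subseteq> uminus ` bc_configs V E A \<xi>"
  proof
    fix \<tau> assume "\<tau> \<in> bc_configs V E A (- \<xi>)"
    then have "- \<tau> \<in> bc_configs V E A \<xi>"
      by (auto simp: bc_configs_def uminus_ext_configs)
    then show "\<tau> \<in> uminus ` bc_configs V E A \<xi>"
      by (rule rev_image_eqI) simp
  qed
qed

lemma bc_configs_subset_fun_box: "bc_configs V E A \<xi> \<subseteq> fun_box (gbar V E) {-1, 0, 1} 0"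
  by (auto simp: bc_configs_def ext_configs_def fun_box_def gbar_def)

lemma finite_bc_configs:
  assumes "finite V" and "\<forall>e\<in>E. e \<subseteq> V"
  shows "finite (bc_configs V E A \<xi>)"
  using bc_configs_subset_fun_box
  by (rule finite_subset) (intro finite_fun_box finite_gbar assms; simp)

lemma four_functions_bc_configs:
  assumes "finite V" and "\<forall>e\<in>E. e \<subseteq> V"
  shows "four_functions (bc_configs V E A \<xi>)"
proof (rule four_functions_sublattice)
  show "four_functions (fun_box (gbar V E) {-1, 0, 1 :: int} 0)"
    by (intro four_functions_fun_box four_functions_chain finite_gbar assms) simp
  show "finite (fun_box (gbar V E) {-1, 0, 1 :: int} 0)"
    by (intro finite_fun_box finite_gbar assms) simp
qed (simp_all add: bc_configs_subset_fun_box sup_bc_configs inf_bc_configs)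

lemma Wt_max_min:
  fixes a a' b b' :: int
  assumes "a \<in> {-1, 1}" "a' \<in> {-1, 1}" "b \<in> {-1, 0, 1}" "b' \<in> {-1, 0, 1}"
    and "\<bar>a - b\<bar> \<le> 1" "\<bar>a' - b'\<bar> \<le> 1"
  shows "Wt t (max a a') (max b b') * Wt t (min a a') (min b b') = Wt t a b * Wt t a' b'"
  using assms(1-4) unfolding insert_iff empty_iff simp_thms
  by (elim disjE) (use assms(5,6) in \<open>simp_all add: Wt_def\<close>)

lemma Wt_uminus: "Wt t (- a) (- b) = Wt t a b"
  by (simp add: Wt_def)

lemma ext_weight_sup_inf:
  assumes "\<forall>e\<in>E. e \<subseteq> V" and "\<sigma> \<in> ext_configs V E" and "\<sigma>' \<in> ext_configs V E"
  shows "ext_weight V E T h (sup \<sigma> \<sigma>') * ext_weight V E T h (inf \<sigma> \<sigma>')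
       = ext_weight V E T h \<sigma> * ext_weight V E T h \<sigma>'"
proof -
  let ?W = "\<lambda>\<tau>. \<Prod>e\<in>E. \<Prod>v\<in>e. Wt (ising_t T) (\<tau> (Inl v)) (\<tau> (Inr e))"
  let ?F = "\<lambda>\<tau>. exp ((1 / T) * (\<Sum>v\<in>V. h v * of_int (\<tau> (Inl v))))"
  have "Wt t (sup \<sigma> \<sigma>' (Inl v)) (sup \<sigma> \<sigma>' (Inr e)) * Wt t (inf \<sigma> \<sigma>' (Inl v)) (inf \<sigma> \<sigma>' (Inr e))
      = Wt t (\<sigma> (Inl v)) (\<sigma> (Inr e)) * Wt t (\<sigma>' (Inl v)) (\<sigma>' (Inr e))"
    if "e \<in> E" "v \<in> e" for t e v
    unfolding sup_fun_def inf_fun_def sup_max inf_min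
    using assms that by (intro Wt_max_min) (auto simp: ext_configs_def)
  then have W: "?W (sup \<sigma> \<sigma>') * ?W (inf \<sigma> \<sigma>') = ?W \<sigma> * ?W \<sigma>'"
    unfolding prod.distrib[symmetric] by (intro prod.cong refl) auto
  have "(\<Sum>v\<in>V. h v * of_int (sup \<sigma> \<sigma>' (Inl v))) + (\<Sum>v\<in>V. h v * of_int (inf \<sigma> \<sigma>' (Inl v)))
      = (\<Sum>v\<in>V. h v * of_int (\<sigma> (Inl v))) + (\<Sum>v\<in>V. h v * of_int (\<sigma>' (Inl v)))"
    unfolding sum.distrib[symmetric]
    by (intro sum.cong refl) (simp add: sup_max inf_min max_def min_def algebra_simps)
  then have F: "?F (sup \<sigma> \<sigma>') * ?F (inf \<sigma> \<sigma>') = ?F \<sigma> * ?F \<sigma>'"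
    by (simp only: exp_add[symmetric] distrib_left[symmetric])
  have "ext_weight V E T h (sup \<sigma> \<sigma>') * ext_weight V E T h (inf \<sigma> \<sigma>')
      = (?W (sup \<sigma> \<sigma>') * ?W (inf \<sigma> \<sigma>')) * (?F (sup \<sigma> \<sigma>') * ?F (inf \<sigma> \<sigma>'))"
    by (simp add: ext_weight_def ac_simps)
  also have "\<dots> = (?W \<sigma> * ?W \<sigma>') * (?F \<sigma> * ?F \<sigma>')"
    by (simp only: W F)
  also have "\<dots> = ext_weight V E T h \<sigma> * ext_weight V E T h \<sigma>'"
    by (simp add: ext_weight_def ac_simps)
  finally show ?thesis .
qed

lemma ext_weight_nonneg: "T > 0 \<Longrightarrow> 0 \<le> ext_weight V E T h \<sigma>"
  unfolding ext_weight_def ising_t_def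
  by (intro mult_nonneg_nonneg prod_nonneg) (auto simp: Wt_def)

lemma ext_weight_uminus: "ext_weight V E T h (- \<sigma>) = ext_weight V E T (- h) \<sigma>"
  by (simp add: ext_weight_def Wt_uminus)

lemma ext_mu_nonneg: "T > 0 \<Longrightarrow> 0 \<le> ext_mu V E T h A \<xi> \<sigma>"
  unfolding ext_mu_def by (auto intro!: divide_nonneg_nonneg sum_nonneg ext_weight_nonneg)

lemma sum_ext_mu_le_1: "sum (ext_mu V E T h A \<xi>) (bc_configs V E A \<xi>) \<le> 1"
proof -
  let ?Z = "\<Sum>\<tau>\<in>bc_configs V E A \<xi>. ext_weight V E T h \<tau>"
  have "sum (ext_mu V E T h A \<xi>) (bc_configs V E A \<xi>) = ?Z / ?Z"
    unfolding sum_divide_distrib by (intro sum.cong refl) (simp add: ext_mu_def)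
  also have "\<dots> \<le> 1" by (cases "?Z = 0") auto
  finally show ?thesis .
qed

lemma log_supermodular_on_ext_mu:
  assumes "\<forall>e\<in>E. e \<subseteq> V"
  shows "log_supermodular_on (bc_configs V E A \<xi>) (ext_mu V E T h A \<xi>)"
  unfolding log_supermodular_on_def
proof (intro ballI)
  fix \<sigma> \<sigma>' assume mem: "\<sigma> \<in> bc_configs V E A \<xi>" "\<sigma>' \<in> bc_configs V E A \<xi>"
  then have "ext_weight V E T h (sup \<sigma> \<sigma>') * ext_weight V E T h (inf \<sigma> \<sigma>')
      = ext_weight V E T h \<sigma> * ext_weight V E T h \<sigma>'"
    using assms by (intro ext_weight_sup_inf) (auto simp: bc_configs_def)
  then show "ext_mu V E T h A \<xi> \<sigma> * ext_mu V E T h A \<xi> \<sigma>'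
      \<le> ext_mu V E T h A \<xi> (sup \<sigma> \<sigma>') * ext_mu V E T h A \<xi> (inf \<sigma> \<sigma>')"
    using mem sup_bc_configs[OF mem] inf_bc_configs[OF mem]
    by (simp add: ext_mu_def times_divide_times_eq)
qed

lemma ext_mu_uminus: "ext_mu V E T h A \<xi> (- \<sigma>) = ext_mu V E T (- h) A (- \<xi>) \<sigma>"
proof -
  have "(\<Sum>\<tau>\<in>bc_configs V E A (- \<xi>). ext_weight V E T (- h) \<tau>)
      = (\<Sum>\<tau>\<in>bc_configs V E A (- \<xi>). ext_weight V E T h (- \<tau>))"
    by (simp add: ext_weight_uminus)
  also have "\<dots> = sum (ext_weight V E T h) (uminus ` bc_configs V E A (- \<xi>))"
    by (simp add: sum.reindex inj_on_def)
  also have "\<dots> = sum (ext_weight V E T h) (bc_configs V E A \<xi>)"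
    by (simp add: uminus_bc_configs)
  moreover have "- \<sigma> \<in> bc_configs V E A \<xi> \<longleftrightarrow> \<sigma> \<in> bc_configs V E A (- \<xi>)"
    using uminus_bc_configs[of V E A \<xi>] by force
  ultimately show ?thesis
    by (simp add: ext_mu_def ext_weight_uminus)
qed

lemma prod_prob_spin_flip:
  assumes "finite V" and "\<forall>e\<in>E. e \<subseteq> V"
  shows "prod_prob V E T h A \<xi>1 \<xi>2 Ev
    = (\<Sum>(\<sigma>, \<tau>) \<in> (bc_configs V E A \<xi>1 \<times> bc_configs V E A (- \<xi>2)) \<inter>
          {(\<sigma>, \<tau>). pair_config \<sigma> (- \<tau>) \<in> Ev}.
         ext_mu V E T h A \<xi>1 \<sigma> * ext_mu V E T (- h) A (- \<xi>2) \<tau>)"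
proof -
  let ?X = "bc_configs V E A \<xi>1 \<times> bc_configs V E A (- \<xi>2)"
  have "bc_configs V E A \<xi>1 \<times> bc_configs V E A \<xi>2 = map_prod id uminus ` ?X"
    using uminus_bc_configs[of V E A "- \<xi>2"] by (simp add: map_prod_surj_on)
  then have "prod_prob V E T h A \<xi>1 \<xi>2 Ev
      = (\<Sum>(\<sigma>, \<tau>) \<in> ?X. if pair_config \<sigma> (- \<tau>) \<in> Ev
           then ext_mu V E T h A \<xi>1 \<sigma> * ext_mu V E T (- h) A (- \<xi>2) \<tau> else 0)"
    by (simp add: prod_prob_def sum.reindex inj_on_def case_prod_beta ext_mu_uminus cong: if_cong)
  also have "\<dots> = (\<Sum>(\<sigma>, \<tau>) \<in> ?X \<inter> {(\<sigma>, \<tau>). pair_config \<sigma> (- \<tau>) \<in> Ev}.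
         ext_mu V E T h A \<xi>1 \<sigma> * ext_mu V E T (- h) A (- \<xi>2) \<tau>)"
    using assms by (simp add: sum.inter_restrict finite_bc_configs case_prod_beta)
  finally show ?thesis .
qed

lemma increasing_event_mono:
  assumes "increasing_event V E Ev" and "pair_config \<sigma>1 \<sigma>2 \<in> Ev"
    and "\<sigma>1' \<in> ext_configs V E" and "\<sigma>2' \<in> ext_configs V E"
    and "\<sigma>1 \<le> \<sigma>1'" and "\<sigma>2' \<le> \<sigma>2"
  shows "pair_config \<sigma>1' \<sigma>2' \<in> Ev"
proof -
  have "pair_config \<sigma>1' \<sigma>2' \<in> Theta_G V E"
    using assms(3,4) by (auto simp: ext_configs_def Theta_G_def pair_config_def gbar_def)
  with assms(1,2,5,6) show ?thesis
    unfolding increasing_event_def by (auto simp: theta_ge_def pair_config_def le_fun_def)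
qed

lemma FKG_ext_mu_Times:
  fixes V :: "'v set" and E :: "'v set set" and A :: "'v set" and \<xi> \<xi>' :: "'v \<Rightarrow> int"
    and h h' :: "'v \<Rightarrow> real" and T :: real
    and U W :: "(('v site \<Rightarrow> int) \<times> ('v site \<Rightarrow> int)) set"
  defines "X \<equiv> bc_configs V E A \<xi> \<times> bc_configs V E A \<xi>'"
    and "\<mu> \<equiv> \<lambda>(\<sigma>, \<tau>). ext_mu V E T h A \<xi> \<sigma> * ext_mu V E T h' A \<xi>' \<tau>"
  assumes "finite V" and edges: "\<forall>e\<in>E. e \<subseteq> V" and "T > 0"
    and U: "\<And>p q. p \<in> X \<Longrightarrow> q \<in> X \<Longrightarrow> p \<le> q \<Longrightarrow> p \<in> U \<Longrightarrow> q \<in> U"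
    and W: "\<And>p q. p \<in> X \<Longrightarrow> q \<in> X \<Longrightarrow> p \<le> q \<Longrightarrow> p \<in> W \<Longrightarrow> q \<in> W"
  shows "sum \<mu> (X \<inter> U) * sum \<mu> (X \<inter> W) \<le> sum \<mu> (X \<inter> (U \<inter> W))"
proof -
  have nonneg: "0 \<le> \<mu> p" for p
    using \<open>T > 0\<close> by (cases p) (simp add: \<mu>_def ext_mu_nonneg)
  have "sum \<mu> (X \<inter> U) * sum \<mu> (X \<inter> W) \<le> sum \<mu> (X \<inter> (U \<inter> W)) * sum \<mu> X"
  proof (rule FKG_inequality[OF _ _ _ nonneg _ U W])
    show "four_functions X"
      unfolding X_def using \<open>finite V\<close> edges by (intro four_functions_Times four_functions_bc_configs)
    show "finite X"
      unfolding X_def using \<open>finite V\<close> edges by (simp add: finite_bc_configs)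
    show "sup p q \<in> X" if "p \<in> X" "q \<in> X" for p q
      using that unfolding X_def by (cases p, cases q) (simp add: sup_bc_configs)
    show "log_supermodular_on X \<mu>"
      unfolding X_def \<mu>_def using edges \<open>T > 0\<close>
      by (intro log_supermodular_on_Times log_supermodular_on_ext_mu ext_mu_nonneg)
  qed
  also have "\<dots> \<le> sum \<mu> (X \<inter> (U \<inter> W))"
  proof (rule mult_left_le)
    have "sum \<mu> X = sum (ext_mu V E T h A \<xi>) (bc_configs V E A \<xi>) *
        sum (ext_mu V E T h' A \<xi>') (bc_configs V E A \<xi>')"
      by (simp add: X_def \<mu>_def sum_product sum.cartesian_product)
    also have "\<dots> \<le> 1"
      using \<open>T > 0\<close> by (intro mult_le_one sum_ext_mu_le_1 sum_nonneg ext_mu_nonneg)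
    finally show "sum \<mu> X \<le> 1" .
    show "0 \<le> sum \<mu> (X \<inter> (U \<inter> W))"
      by (rule sum_nonneg) (rule nonneg)
  qed
  finally show ?thesis .
qed

theorem lemma2p3:
  fixes V :: "'v set" and E :: "'v set set" and A :: "'v set"
    and \<xi>1 \<xi>2 :: "'v \<Rightarrow> int" and h :: "'v \<Rightarrow> real" and T :: real
    and EvA EvB :: "('v site \<Rightarrow> int \<times> int) set"
  assumes "finite V"
    and "\<forall>e\<in>E. e \<subseteq> V \<and> card e = 2"
    and "A \<subseteq> V"
    and "\<forall>v\<in>A. \<xi>1 v \<in> {-1, 1}"
    and "\<forall>v\<in>A. \<xi>2 v \<in> {-1, 1}"
    and "T > 0"
    and "increasing_event V E EvA"
    and "increasing_event V E EvB"
  shows "prod_prob V E T h A \<xi>1 \<xi>2 (EvA \<inter> EvB)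
           \<ge> prod_prob V E T h A \<xi>1 \<xi>2 EvA * prod_prob V E T h A \<xi>1 \<xi>2 EvB"
proof -
  have edges: "\<forall>e\<in>E. e \<subseteq> V" using assms(2) by blast
  let ?X = "bc_configs V E A \<xi>1 \<times> bc_configs V E A (- \<xi>2)"
  let ?\<mu> = "\<lambda>(\<sigma>, \<tau>). ext_mu V E T h A \<xi>1 \<sigma> * ext_mu V E T (- h) A (- \<xi>2) \<tau>"
  let ?U = "\<lambda>Ev. {(\<sigma>, \<tau>). pair_config \<sigma> (- \<tau>) \<in> Ev}"
  have prob: "prod_prob V E T h A \<xi>1 \<xi>2 Ev = sum ?\<mu> (?X \<inter> ?U Ev)" for Ev
    using assms(1) edges by (rule prod_prob_spin_flip)
  have up: "q \<in> ?U Ev"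
    if "increasing_event V E Ev" "p \<in> ?X" "q \<in> ?X" "p \<le> q" "p \<in> ?U Ev" for Ev p q
    using that by (cases p, cases q)
      (auto simp: bc_configs_def le_fun_def intro: increasing_event_mono uminus_ext_configs)
  have "sum ?\<mu> (?X \<inter> ?U EvA) * sum ?\<mu> (?X \<inter> ?U EvB) \<le> sum ?\<mu> (?X \<inter> (?U EvA \<inter> ?U EvB))"
    using assms(1) edges assms(6) by (rule FKG_ext_mu_Times) (use up assms(7,8) in blast)+
  moreover have "?U (EvA \<inter> EvB) = ?U EvA \<inter> ?U EvB" by auto
  ultimately show ?thesis by (simp only: prob)
qed

end
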